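(* Let $n\ge2$ be an integer. (i) For every integer $T$ with $1\le T\le\lfloor n/2\rfloor$, there exists a nonempty open subinterval $I=I(T)$ of $(1/n,n)$ such that for all $\lambda\in I$ $$\widehat\lambda_{n,T}(\lambda)>\frac1n \quad\text{and}\quad \lambda_{n,T+2}(\lambda)<\frac1n .$$ (ii) For every integer $T$ with $\lfloor n/2\rfloor<T\le n+1$, we have $\widehat\lambda_{n,T}(\lambda)=\lambda_{n,T+1}(\lambda)<1/n$ for all $\lambda\in(1/n,\infty]$.
   Context: For an integer $n\ge1$ let $f_n(x)=(1+x)^{n+1}/x$ for $x>0$. The function $f_n$ is strictly decreasing on $(0,1/n]$ and strictly increasing on $[1/n,\infty)$. Regular graph exponents (Schmidt–Summerer), defined algebraically. For $\lambda\in[1/n,\infty)$ let $\mu\in(0,1/n]$ be the unique solution of $f_n(\mu)=f_n(\lambda)$, and set $$\lambda_{n,j}(\lambda)=\lambda^{1-\frac{j-1}{n+1}}\mu^{\frac{j-1}{n+1}},\qquad 1\le j\le n+2 .$$ All ratios $\lambda_{n,j}/\lambda_{n,j+1}$ are equal. For $\lambda=\infty$ put $\lambda_{n,1}=\infty$, $\lambda_{n,2}=1$ and $\lambda_{n,j}=0$ for $j\ge3$. Put $\widehat\lambda_{n,j}(\lambda):=\lambda_{n,j+1}(\lambda)$ for $1\le j\le n+1$. These are the exponents $\lambda_{n,j},\widehat\lambda_{n,j}$ of the regular graph in dimension $n$ with parameter $\lambda_n=\lambda$. (In terms of Diophantine approximation: by $\overline\psi_{n,T}<0\iff\widehat\lambda_{n,T}>1/n$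 and $\underline\psi_{n,T+2}>0\iff\lambda_{n,T+2}<1/n$, part (i) gives vectors inducing the regular graph whose $T$-th successive minimum function tends to $-\infty$ and whose $(T+2)$-nd tends to $+\infty$; this is Schmidt's property.) *)

theory Defs
  imports Complex_Main "HOL-Library.Extended_Real"
begin

definition fn_reg :: "nat \<Rightarrow> real \<Rightarrow> real" where
  "fn_reg n x = (1 + x) ^ (n + 1) / x"

definition mu_reg :: "nat \<Rightarrow> real \<Rightarrow> real" where
  "mu_reg n l = (THE m. 0 < m \<and> m \<le> 1 / real n \<and> fn_reg n m = fn_reg n l)"

text \<open>Regular graph exponents lambda_{n,j}(lambda), 1 <= j <= n+2, with lambda in [1/n, infinity]
  (infinity encoded via extended reals).\<close>
definition lam_reg :: "nat \<Rightarrow> nat \<Rightarrow> ereal \<Rightarrow> ereal" where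
  "lam_reg n j L =
     (if L = \<infinity> then (if j = 1 then \<infinity> else if j = 2 then 1 else 0)
      else ereal ((real_of_ereal L) powr (1 - (real j - 1) / (real n + 1))
                  * (mu_reg n (real_of_ereal L)) powr ((real j - 1) / (real n + 1))))"

definition lamhat_reg :: "nat \<Rightarrow> nat \<Rightarrow> ereal \<Rightarrow> ereal" where
  "lamhat_reg n j L = lam_reg n (j + 1) L"

end

theory Submission imports Defs begin

text \<open>Put \<open>S(v) = v + v\<^sup>2 + \<dots> + v\<^sup>n\<close> for \<open>0 < v < 1\<close>. The map \<open>v \<mapsto> \<lambda> = 1/S(v)\<close> is a bijection
  onto \<open>(1/n, \<infinity>)\<close>, and \<open>\<mu> = \<lambda> v\<^sup>n\<^sup>+\<^sup>1\<close> because \<open>1 + \<lambda> v\<^sup>n\<^sup>+\<^sup>1 = v (1 + \<lambda>)\<close>; hence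
  \<open>\<lambda>\<^sub>n\<^sub>,\<^sub>j = \<lambda> v\<^sup>j\<^sup>-\<^sup>1\<close>, and the exponents are compared with \<open>1/n\<close> by comparing \<open>n v\<^sup>k\<close> with \<open>S(v)\<close>.
  For \<open>2T > n\<close> the pairing \<open>v\<^sup>i + v\<^sup>n\<^sup>+\<^sup>1\<^sup>-\<^sup>i \<ge> 2 v\<^sup>T\<close> gives \<open>n v\<^sup>T < S(v)\<close>, which is (ii).
  For (i) one needs \<open>n v\<^sup>T\<^sup>+\<^sup>1 < S(v) < n v\<^sup>T\<close>. For \<open>T \<ge> 2\<close> the function
  \<open>S(v) - n v\<^sup>T (3 + v)/4\<close> is positive at \<open>1/n\<close> and, having derivative \<open>n ((n+1)/2 - T - 1/4) > 0\<close>
  at its zero \<open>v = 1\<close>, negative just left of \<open>1\<close>; a zero in between does the job. For \<open>T = 1\<close> the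
  point \<open>v = 2/(2n - 1)\<close> works. Both inequalities are open conditions, so they hold on an
  interval of \<open>v\<close>, whose image is an interval of \<open>\<lambda>\<close>.\<close>

definition geom_sum :: "nat \<Rightarrow> real \<Rightarrow> real" where
  "geom_sum n v = (\<Sum>i<n. v ^ Suc i)"

lemma geom_sum_mult_diff: "geom_sum n v * (v - 1) = v ^ (n + 1) - v"
  by (induction n) (auto simp: geom_sum_def algebra_simps)

lemma geom_sum_pos: "0 < v \<Longrightarrow> 1 \<le> n \<Longrightarrow> 0 < geom_sum n v"
  unfolding geom_sum_def by (intro sum_pos) (auto simp: lessThan_empty_iff)

lemma geom_sum_ge_self:
  assumes "0 < v" "1 \<le> n"
  shows "v \<le> geom_sum n v"
proof -
  have "v = (\<Sum>i\<in>{0}. v ^ Suc i)" by simp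
  also have "\<dots> \<le> geom_sum n v"
    unfolding geom_sum_def by (rule sum_mono2) (use assms in auto)
  finally show ?thesis .
qed

lemma geom_sum_less_n:
  assumes "0 < v" "v < 1" "1 \<le> n"
  shows "geom_sum n v < real n"
proof -
  have "geom_sum n v < (\<Sum>i<n. 1)"
    unfolding geom_sum_def
    by (rule sum_strict_mono)
       (use assms in \<open>auto simp: lessThan_empty_iff simp del: power_Suc intro!: power_Suc_less_one\<close>)
  then show ?thesis by simp
qed

lemma n_mult_power_le_geom_sum:
  assumes "0 < v" "v < 1"
  shows "real n * v ^ (n + 1) \<le> geom_sum n v"
proof -
  have "(\<Sum>i<n. v ^ (n + 1)) \<le> geom_sum n v"
    unfolding geom_sum_def by (rule sum_mono) (use assms in \<open>auto intro: power_decreasing\<close>)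
  then show ?thesis by simp
qed

lemma geom_sum_strict_mono:
  assumes "0 \<le> x" "x < y" "1 \<le> n"
  shows "geom_sum n x < geom_sum n y"
  unfolding geom_sum_def
  by (rule sum_strict_mono)
     (use assms in \<open>auto simp: lessThan_empty_iff simp del: power_Suc intro!: power_strict_mono\<close>)

lemma geom_sum_less_iff:
  assumes "0 \<le> x" "0 \<le> y" "1 \<le> n"
  shows "geom_sum n x < geom_sum n y \<longleftrightarrow> x < y"
  using geom_sum_strict_mono[of x y n] geom_sum_strict_mono[of y x n] assms
  by (cases x y rule: linorder_cases) auto

lemma continuous_on_geom_sum: "continuous_on A (geom_sum n)"
  unfolding geom_sum_def by (intro continuous_intros)

lemma geom_sum_has_real_derivative_at_1:
  "(geom_sum n has_real_derivative real n * (real n + 1) / 2) (at 1)"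
proof -
  have "(geom_sum n has_real_derivative (\<Sum>i<n. real (Suc i))) (at 1)"
    unfolding geom_sum_def[abs_def]
    by (rule DERIV_sum) (use DERIV_pow[of "Suc _" 1] in simp)
  moreover have "(\<Sum>i<n. real (Suc i)) = real n * (real n + 1) / 2"
    by (induction n) (auto simp: field_simps)
  ultimately show ?thesis by (simp only:)
qed

lemma fn_reg_strict_decreasing:
  assumes "0 < x" "x < y" "y \<le> 1 / real n" "1 \<le> n"
  shows "fn_reg n y < fn_reg n x"
proof (rule DERIV_neg_imp_decreasing_open[OF assms(2)])
  fix z assume z: "x < z" "z < y"
  have D: "(fn_reg n has_real_derivative
          (real (n + 1) * (1 + z) ^ n * z - (1 + z) ^ (n + 1)) / (z * z)) (at z)"
    unfolding fn_reg_def[abs_def] using z assms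
    by (auto intro!: derivative_eq_intros simp: power2_eq_square) (cases n, auto simp: algebra_simps)
  have "real n * z < real n * y" using z assms by simp
  also have "\<dots> \<le> 1" using assms by (simp add: field_simps)
  finally have "real n * z < 1" .
  then have "(1 + z) ^ n * (real n * z - 1) < 0"
    using z assms by (intro mult_pos_neg) auto
  moreover have "real (n + 1) * (1 + z) ^ n * z - (1 + z) ^ (n + 1) = (1 + z) ^ n * (real n * z - 1)"
    by (simp add: algebra_simps)
  moreover have "z * z > 0" using z assms by simp
  ultimately show "\<exists>d. (fn_reg n has_real_derivative d) (at z) \<and> d < 0"
    using D by (metis divide_neg_pos)
next
  show "continuous_on {x..y} (fn_reg n)"
    unfolding fn_reg_def[abs_def] using assms by (intro continuous_intros) auto
qed

lemma mu_reg_geom_sum: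
  assumes v: "0 < v" "v < 1" and n: "1 \<le> n"
  shows "mu_reg n (1 / geom_sum n v) = v ^ (n + 1) / geom_sum n v"
proof -
  define S where "S = geom_sum n v"
  define l where "l = 1 / S"
  define m where "m = v ^ (n + 1) / S"
  have S: "S > 0" using geom_sum_pos v n by (simp add: S_def)
  have "1 + m = v * (1 + l)"
    using geom_sum_mult_diff[of n v] S unfolding m_def l_def S_def[symmetric] by (simp add: field_simps)
  then have fm: "fn_reg n m = fn_reg n l"
    unfolding fn_reg_def using S v by (simp add: m_def l_def power_mult_distrib)
  have "real n * v ^ (n + 1) \<le> S" using n_mult_power_le_geom_sum v by (simp add: S_def)
  then have m_le: "m \<le> 1 / real n" using S n unfolding m_def by (simp add: field_simps)
  have m_pos: "0 < m" using S v by (simp add: m_def)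
  have "(THE m'. 0 < m' \<and> m' \<le> 1 / real n \<and> fn_reg n m' = fn_reg n l) = m"
  proof (rule the_equality)
    fix m' assume m': "0 < m' \<and> m' \<le> 1 / real n \<and> fn_reg n m' = fn_reg n l"
    show "m' = m"
      using fn_reg_strict_decreasing[of m' m n] fn_reg_strict_decreasing[of m m' n] m' m_le m_pos n fm
      by (cases m' m rule: linorder_cases) auto
  qed (use m_pos m_le fm in simp)
  then show ?thesis by (simp add: mu_reg_def l_def m_def S_def)
qed

lemma lam_reg_geom_sum:
  assumes v: "0 < v" "v < 1" and n: "1 \<le> n"
  shows "lam_reg n (Suc j) (ereal (1 / geom_sum n v)) = ereal (v ^ j / geom_sum n v)"
proof -
  define l where "l = 1 / geom_sum n v"
  define t where "t = real j / (real n + 1)"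
  have l: "l > 0" using geom_sum_pos v n by (simp add: l_def)
  have "v ^ (n + 1) = v powr (real n + 1)"
    using v powr_realpow[of v "n + 1"] by (simp add: add.commute)
  then have "(l * v ^ (n + 1)) powr t = l powr t * v ^ j"
    using l v by (simp add: powr_mult powr_powr t_def powr_realpow)
  then have "l powr (1 - t) * (l * v ^ (n + 1)) powr t = (l powr (1 - t) * l powr t) * v ^ j"
    by simp
  also have "l powr (1 - t) * l powr t = l"
    using l by (simp add: powr_add[symmetric])
  finally show ?thesis
    using mu_reg_geom_sum[OF v n] unfolding lam_reg_def by (simp add: t_def l_def)
qed

lemma geom_sum_inverse_surj:
  assumes n: "1 \<le> n" and l: "1 / real n < l"
  shows "\<exists>v. 0 < v \<and> v < 1 \<and> l = 1 / geom_sum n v"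
proof -
  have l_pos: "0 < l" using l n by (smt (verit) of_nat_0_le_iff divide_nonneg_nonneg)
  have "1 / l < real n" using l l_pos n by (simp add: field_simps)
  have S0: "geom_sum n 0 = 0" and S1: "geom_sum n 1 = real n" by (simp_all add: geom_sum_def)
  obtain v where v: "0 \<le> v" "v \<le> 1" "geom_sum n v = 1 / l"
    using IVT'[of "geom_sum n" 0 "1 / l" 1] S0 S1 \<open>1 / l < real n\<close> l_pos continuous_on_geom_sum
    by force
  have "v \<noteq> 0" "v \<noteq> 1" using v S0 S1 l_pos \<open>1 / l < real n\<close> by auto
  then show ?thesis using v l_pos by (intro exI[of _ v]) auto
qed

lemma two_power_le_power_add:
  fixes v :: real and a b T :: nat
  assumes v: "0 \<le> v" "v \<le> 1" and ab: "a + b \<le> 2 * T"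
  shows "2 * v ^ T \<le> v ^ a + v ^ b"
    and "v ^ a \<noteq> v ^ b \<Longrightarrow> 2 * v ^ T < v ^ a + v ^ b"
proof -
  have "v ^ (2 * T) \<le> v ^ (a + b)" using v ab by (intro power_decreasing) auto
  then have "(2 * v ^ T)\<^sup>2 \<le> 4 * (v ^ a * v ^ b)"
    by (simp add: power_mult_distrib power_add power_mult[symmetric] mult.commute)
  moreover have "(v ^ a + v ^ b)\<^sup>2 = (v ^ a - v ^ b)\<^sup>2 + 4 * (v ^ a * v ^ b)"
    by (simp add: power2_eq_square algebra_simps)
  ultimately have key: "(2 * v ^ T)\<^sup>2 + (v ^ a - v ^ b)\<^sup>2 \<le> (v ^ a + v ^ b)\<^sup>2"
    by linarith
  have nonneg: "0 \<le> v ^ a + v ^ b" using v by simp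
  have "(2 * v ^ T)\<^sup>2 \<le> (v ^ a + v ^ b)\<^sup>2"
    using key zero_le_power2[of "v ^ a - v ^ b"] by linarith
  then show "2 * v ^ T \<le> v ^ a + v ^ b" using nonneg by (rule power2_le_imp_le)
  assume "v ^ a \<noteq> v ^ b"
  then have "0 < (v ^ a - v ^ b)\<^sup>2" by simp
  then have "(2 * v ^ T)\<^sup>2 < (v ^ a + v ^ b)\<^sup>2" using key by linarith
  then show "2 * v ^ T < v ^ a + v ^ b" using nonneg by (rule power_less_imp_less_base)
qed

lemma n_mult_power_less_geom_sum:
  assumes v: "0 < v" "v < 1" and n: "2 \<le> n" and T: "n < 2 * T"
  shows "real n * v ^ T < geom_sum n v"
proof -
  have "geom_sum n v = (\<Sum>i<n. v ^ Suc (n - Suc i))"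
    unfolding geom_sum_def by (rule sum.nat_diff_reindex[symmetric])
  also have "\<dots> = (\<Sum>i<n. v ^ (n - i))" by (intro sum.cong) (auto simp: Suc_diff_Suc)
  finally have reversed: "geom_sum n v = (\<Sum>i<n. v ^ (n - i))" .
  \<comment> \<open>strictness comes from the unbalanced pair \<open>v + v\<^sup>n\<close>\<close>
  have "v ^ n < v ^ 1" using v n by (intro power_strict_decreasing) auto
  then have "2 * v ^ T < v ^ Suc 0 + v ^ (n - 0)"
    using v T by (intro two_power_le_power_add(2)) auto
  moreover have "2 * v ^ T \<le> v ^ Suc i + v ^ (n - i)" if "i < n" for i
    using v T that by (intro two_power_le_power_add(1)) auto
  ultimately have "(\<Sum>i<n. 2 * v ^ T) < (\<Sum>i<n. v ^ Suc i + v ^ (n - i))"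
    using n by (intro sum_strict_mono_ex1 bexI[of _ 0]) auto
  also have "\<dots> = 2 * geom_sum n v" using reversed by (simp add: sum.distrib geom_sum_def)
  finally show ?thesis by simp
qed

lemma lam_reg_less_inverse:
  assumes n: "2 \<le> n" and T: "n div 2 < T" and L: "ereal (1 / real n) < L"
  shows "lam_reg n (T + 1) L < ereal (1 / real n)"
proof (cases L)
  case PInf
  have "2 \<le> T" using T n by linarith
  then show ?thesis using PInf n by (simp add: lam_reg_def)
next
  case (real l)
  then have "1 / real n < l" using L by simp
  then obtain v where v: "0 < v" "v < 1" and l: "l = 1 / geom_sum n v"
    using geom_sum_inverse_surj[of n l] n by auto
  have "real n * v ^ T < geom_sum n v"
    using n_mult_power_less_geom_sum[OF v n, of T] T by linarith
  then have "v ^ T / geom_sum n v < 1 / real n"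
    using geom_sum_pos[OF v(1)] n by (simp add: field_simps)
  then show ?thesis using lam_reg_geom_sum[OF v, of n T] n real l by simp
qed (use L in simp)

text \<open>For \<open>\<lambda> = 1 / geom_sum n v\<close> the conditions \<open>\<widehat>\<lambda>\<^sub>n\<^sub>,\<^sub>T > 1/n\<close> and \<open>\<lambda>\<^sub>n\<^sub>,\<^sub>T\<^sub>+\<^sub>2 < 1/n\<close> of part (i).\<close>

definition schmidt_ratio :: "nat \<Rightarrow> nat \<Rightarrow> real \<Rightarrow> bool" where
  "schmidt_ratio n T v \<longleftrightarrow> 1 / real n < v \<and> v < 1 \<and>
     geom_sum n v < real n * v ^ T \<and> real n * v ^ (T + 1) < geom_sum n v"

lemma open_schmidt_ratio: "open {v. schmidt_ratio n T v}"
proof -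
  have "{v. schmidt_ratio n T v} = {v. 1 / real n < v} \<inter> {v. v < 1} \<inter>
      {v. geom_sum n v < real n * v ^ T} \<inter> {v. real n * v ^ (T + 1) < geom_sum n v}"
    by (auto simp: schmidt_ratio_def)
  then show ?thesis
    by (auto intro!: open_Int open_Collect_less continuous_intros continuous_on_geom_sum)
qed

lemma schmidt_ratio_1:
  assumes n: "2 \<le> n"
  shows "schmidt_ratio n 1 (2 / (2 * real n - 1))"
proof -
  define v where "v = 2 / (2 * real n - 1)"
  have n2: "real n \<ge> 2" using n by simp
  have v_pos: "0 < v" and v1: "v < 1" and vn: "1 / real n < v"
    using n2 by (simp_all add: v_def field_simps)
  have "v ^ Suc i \<le> v" for i
    using v_pos v1 by (simp add: power_le_one mult_left_le)
  moreover have "v ^ Suc 1 < v" using v_pos v1 by (simp add: power2_eq_square)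
  ultimately have "geom_sum n v < (\<Sum>i<n. v)"
    unfolding geom_sum_def using n by (intro sum_strict_mono_ex1 bexI[of _ 1]) auto
  then have upper: "geom_sum n v < real n * v ^ 1" by simp
  have "v + v\<^sup>2 = (\<Sum>i\<in>{0, 1}. v ^ Suc i)" by (simp add: power2_eq_square)
  also have "\<dots> \<le> geom_sum n v"
    unfolding geom_sum_def by (rule sum_mono2) (use n v_pos in auto)
  finally have two_terms: "v + v\<^sup>2 \<le> geom_sum n v" .
  have "(real n - 1) * v < 1" using n2 by (simp add: v_def field_simps)
  then have "v * ((real n - 1) * v) < v * 1" using v_pos by (rule mult_strict_left_mono)
  then have "real n * v\<^sup>2 < v + v\<^sup>2" by (simp add: power2_eq_square algebra_simps)
  then have "real n * v ^ (1 + 1) < geom_sum n v" using two_terms by (simp add: power2_eq_square)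
  then show ?thesis using vn v1 upper by (simp add: schmidt_ratio_def v_def)
qed

lemma geom_sum_less_left_of_1:
  assumes n: "2 \<le> n" and T: "2 * T \<le> n"
  shows "\<exists>v. 1 / real n < v \<and> v < 1 \<and> geom_sum n v < real n * v ^ T * (3 + v) / 4"
proof -
  define \<phi> where "\<phi> v = geom_sum n v - real n * v ^ T * (3 + v) / 4" for v
  have "(\<phi> has_real_derivative real n * (real n + 1) / 2 - real n * (real T + 1 / 4)) (at 1)"
    unfolding \<phi>_def[abs_def]
    by (auto intro!: derivative_eq_intros geom_sum_has_real_derivative_at_1 simp: field_simps)
  moreover have "real n * (real T + 1 / 4) < real n * (real n + 1) / 2"
  proof -
    have "real (2 * T) \<le> real n" using T by (rule of_nat_mono)
    then have "real n * (real T + 1 / 4) \<le> real n * (real n / 2 + 1 / 4)"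
      by (intro mult_left_mono) auto
    also have "\<dots> < real n * (real n + 1) / 2" using n by (simp add: field_simps)
    finally show ?thesis .
  qed
  ultimately obtain d where d: "d > 0" "\<And>h. 0 < h \<Longrightarrow> h < d \<Longrightarrow> \<phi> (1 - h) < \<phi> 1"
    using DERIV_pos_inc_left by (metis diff_gt_0_iff_gt)
  define h where "h = min (d / 2) ((1 - 1 / real n) / 2)"
  have "1 / real n < 1" using n by simp
  moreover have "h \<le> (1 - 1 / real n) / 2" unfolding h_def by (rule min.cobounded2)
  moreover have "h \<le> d / 2" unfolding h_def by (rule min.cobounded1)
  moreover have "0 < h" using d \<open>1 / real n < 1\<close> by (simp add: h_def)
  ultimately have h: "0 < h" "h < d" "1 / real n < 1 - h"
    using d by (linarith, linarith, simp add: field_simps)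
  have "\<phi> 1 = 0" by (simp add: \<phi>_def geom_sum_def)
  then have "\<phi> (1 - h) < 0" using d(2)[OF h(1,2)] by simp
  then show ?thesis using h unfolding \<phi>_def by (intro exI[of _ "1 - h"]) auto
qed

lemma exists_schmidt_ratio:
  assumes n: "2 \<le> n" and T: "1 \<le> T" "2 * T \<le> n"
  shows "\<exists>v. schmidt_ratio n T v"
proof (cases "T = 1")
  case True
  then show ?thesis using schmidt_ratio_1[OF n] by blast
next
  case False
  define \<phi> where "\<phi> v = geom_sum n v - real n * v ^ T * (3 + v) / 4" for v
  obtain v1 where v1: "1 / real n < v1" "v1 < 1" "\<phi> v1 < 0"
    using geom_sum_less_left_of_1[OF n T(2)] unfolding \<phi>_def by auto
  have n2: "real n \<ge> 2" using n by simp
  define a where "a = real n * (1 / real n) ^ T"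
  have a_pos: "0 < a" using n2 by (simp add: a_def)
  have "a \<le> real n * (1 / real n)\<^sup>2"
    unfolding a_def using n2 False T by (intro mult_left_mono power_decreasing) auto
  also have "\<dots> = 1 / real n" using n2 by (simp add: power2_eq_square)
  also have "\<dots> \<le> geom_sum n (1 / real n)" using n2 by (intro geom_sum_ge_self) auto
  finally have a_le: "a \<le> geom_sum n (1 / real n)" .
  have "a * ((3 + 1 / real n) / 4) < a * 1"
    using a_pos n2 by (intro mult_strict_left_mono) (auto simp: field_simps)
  then have "0 < \<phi> (1 / real n)" using a_le by (simp add: \<phi>_def a_def)
  moreover have "continuous_on {1 / real n .. v1} \<phi>"
    unfolding \<phi>_def by (intro continuous_intros continuous_on_geom_sum) simp
  ultimately obtain v0 where v0: "1 / real n \<le> v0" "v0 \<le> v1" "\<phi> v0 = 0"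
    using IVT2'[of \<phi> v1 0 "1 / real n"] v1 by force
  have "v0 \<noteq> 1 / real n" using v0(3) \<open>0 < \<phi> (1 / real n)\<close> by auto
  then have v0_gt: "1 / real n < v0" using v0(1) by simp
  have v0_lt: "v0 < 1" using v0 v1 by simp
  have "0 < 1 / real n" using n2 by simp
  then have "0 < v0" using v0_gt by linarith
  then have b_pos: "0 < real n * v0 ^ T" using n2 by simp
  have S: "geom_sum n v0 = real n * v0 ^ T * ((3 + v0) / 4)" using v0(3) by (simp add: \<phi>_def)
  have "geom_sum n v0 < real n * v0 ^ T * 1"
    unfolding S using b_pos v0_lt by (intro mult_strict_left_mono) auto
  moreover have "real n * v0 ^ T * v0 < geom_sum n v0"
    unfolding S using b_pos v0_lt by (intro mult_strict_left_mono) auto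
  ultimately show ?thesis
    using v0_gt v0_lt unfolding schmidt_ratio_def by (intro exI[of _ v0]) (simp add: ac_simps)
qed

lemma real_open_contains_interval:
  fixes U :: "real set"
  assumes "open U" "x \<in> U"
  shows "\<exists>a b. a < b \<and> {a..b} \<subseteq> U"
proof -
  obtain e where e: "0 < e" "\<And>y. dist y x < e \<Longrightarrow> y \<in> U"
    using assms unfolding open_dist by blast
  then have "{x - e / 2 .. x + e / 2} \<subseteq> U"
    by (auto simp: dist_real_def abs_if)
  then show ?thesis using e(1) by (intro exI[of _ "x - e / 2"] exI[of _ "x + e / 2"]) auto
qed

lemma lam_reg_window:
  assumes n: "2 \<le> n" and T: "1 \<le> T" "2 * T \<le> n"
  shows "\<exists>a b::real. 1 / real n \<le> a \<and> a < b \<and> b \<le> real n \<and>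
           (\<forall>l\<in>{a<..<b}. ereal (1 / real n) < lamhat_reg n T (ereal l) \<and>
                          lam_reg n (T + 2) (ereal l) < ereal (1 / real n))"
proof -
  have n1: "1 \<le> n" using n by simp
  obtain v0 where "schmidt_ratio n T v0" using exists_schmidt_ratio[OF n T] ..
  then obtain va vb where vab: "va < vb" and window: "{va..vb} \<subseteq> {v. schmidt_ratio n T v}"
    using real_open_contains_interval[OF open_schmidt_ratio] by blast
  have "va \<in> {va..vb}" "vb \<in> {va..vb}" using vab by auto
  then have "schmidt_ratio n T va" "schmidt_ratio n T vb" using window by blast+
  then have va: "1 / real n < va" and vb: "vb < 1" by (simp_all add: schmidt_ratio_def)
  have "0 < 1 / real n" using n by simp
  then have va_pos: "0 < va" using va by linarith
  have Sa: "0 < geom_sum n va" using geom_sum_pos[OF va_pos n1] .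
  have Sab: "geom_sum n va < geom_sum n vb" using geom_sum_strict_mono va_pos vab n1 by simp
  have "1 / real n \<le> 1 / geom_sum n vb"
    using geom_sum_less_n[of vb n] va_pos vab vb Sa Sab n1 by (simp add: frac_le)
  moreover have "1 / geom_sum n vb < 1 / geom_sum n va" using Sa Sab by (simp add: frac_less2)
  moreover have "1 / geom_sum n va \<le> real n"
  proof -
    have "1 / real n \<le> geom_sum n va" using geom_sum_ge_self[OF va_pos n1] va by linarith
    then show ?thesis using Sa n1 by (simp add: field_simps mult.commute)
  qed
  moreover have "ereal (1 / real n) < lamhat_reg n T (ereal l) \<and>
      lam_reg n (T + 2) (ereal l) < ereal (1 / real n)"
    if l: "1 / geom_sum n vb < l" "l < 1 / geom_sum n va" for l
  proof -
    have "1 / real n < l" using l \<open>1 / real n \<le> 1 / geom_sum n vb\<close> by simp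
    then obtain v where v: "0 < v" "v < 1" and l_eq: "l = 1 / geom_sum n v"
      using geom_sum_inverse_surj[OF n1] by blast
    have S: "0 < geom_sum n v" using geom_sum_pos[OF v(1) n1] .
    have "geom_sum n va < geom_sum n v" "geom_sum n v < geom_sum n vb"
      using l S Sa Sab unfolding l_eq by (simp_all flip: inverse_eq_divide)
    then have "v \<in> {va..vb}" using geom_sum_less_iff va_pos v(1) vab n1 by auto
    then have "schmidt_ratio n T v" using window by blast
    then have "1 / real n < v ^ T / geom_sum n v" "v ^ Suc T / geom_sum n v < 1 / real n"
      using S n1 by (simp_all add: schmidt_ratio_def field_simps)
    then show ?thesis
      using lam_reg_geom_sum[OF v n1, of T] lam_reg_geom_sum[OF v n1, of "Suc T"]
      unfolding lamhat_reg_def l_eq by simp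
  qed
  ultimately show ?thesis by (intro exI[of _ "1 / geom_sum n vb"] exI[of _ "1 / geom_sum n va"]) auto
qed

theorem theorem2p7:
  fixes n :: nat
  assumes "n \<ge> 2"
  shows "(\<forall>T::nat. 1 \<le> T \<and> T \<le> n div 2 \<longrightarrow>
            (\<exists>a b::real. 1 / real n \<le> a \<and> a < b \<and> b \<le> real n \<and>
               (\<forall>l\<in>{a<..<b}. lamhat_reg n T (ereal l) > ereal (1 / real n) \<and>
                              lam_reg n (T + 2) (ereal l) < ereal (1 / real n))))
       \<and> (\<forall>T::nat. n div 2 < T \<and> T \<le> n + 1 \<longrightarrow>
            (\<forall>L::ereal. L > ereal (1 / real n) \<longrightarrow>
               lamhat_reg n T L = lam_reg n (T + 1) L \<and> lam_reg n (T + 1) L < ereal (1 / real n)))"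
proof (rule conjI; intro allI impI)
  fix T :: nat
  assume "1 \<le> T \<and> T \<le> n div 2"
  then show "\<exists>a b::real. 1 / real n \<le> a \<and> a < b \<and> b \<le> real n \<and>
               (\<forall>l\<in>{a<..<b}. lamhat_reg n T (ereal l) > ereal (1 / real n) \<and>
                              lam_reg n (T + 2) (ereal l) < ereal (1 / real n))"
    using lam_reg_window[OF assms, of T] by fastforce
next
  fix T :: nat and L :: ereal
  assume "n div 2 < T \<and> T \<le> n + 1" "L > ereal (1 / real n)"
  then show "lamhat_reg n T L = lam_reg n (T + 1) L \<and> lam_reg n (T + 1) L < ereal (1 / real n)"
    using lam_reg_less_inverse[OF assms] by (simp add: lamhat_reg_def)
qed

end
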